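(* In the setting of the set-expansion estimator (fix $A\in[0,1]^{|\mathcal F|\times M}$, $\boldsymbol\beta\in[0,1]^{|\mathcal F|}$, $D=\mathrm{diag}(1,\dots,M)$, $C>0$, with $\mathcal F_0=\{\mathbf w: A\mathbf w=\boldsymbol\beta,\ \mathbf 0\le\mathbf w\le C\mathbf 1\}\ne\emptyset$; $\theta_{\min},\theta_{\max}$ the min and max of $\mathbf 1^\top AD(\mathbf w+\mathbf 1)$ over $\mathcal F_0$; random estimators $\hat A_n,\hat{\boldsymbol\beta}_n$ with entrywise maximal errors $O_p(n^{-1/2})$; $\hat m_n=\min_{\mathbf 0\le\mathbf w\le C\mathbf 1}\|\hat A_n\mathbf w-\hat{\boldsymbol\beta}_n\|_\infty$; and $\hat\theta_{n,\min}$, $\hat\theta_{n,\max}$ the min and max of $\mathbf 1^\top\hat A_nD(\mathbf w+\mathbf 1)$ over $\{\mathbf w:\|\hat A_n\mathbf w-\hat{\boldsymbol\beta}_n\|_\infty\le\hat m_n+\kappa_n/\sqrt n,\ \mathbf 0\le\mathbf w\le C\mathbf 1\}$), suppose moreover that $A$ has full column rank and that the deterministic sequence $\kappa_n>0$ is bounded (e.g. constant). Then \[\hat\theta_{n,\min}-\theta_{\min}=O_p\Big(\frac1{\sqrt n}\Big),\qquad\hat\theta_{n,\max}-\theta_{\max}=O_p\Big(\frac1{\sqrt n}\Big).\]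
   Context: In the application $A=A_x=[\mathbb{P}(R=1,F=f,Y=y\mid X=x)]_{f,y}$, $\boldsymbol\beta=\boldsymbol\beta_x=(\mathbb{P}(R=0,F=f\mid X=x))_f$ for a fixed stratum $x$, and $n$ is the stratum sample size; full column rank of $A_x$ corresponds to point identification of $\mathbb{E}[Y\mid X=x]$. $\|\cdot\|_\infty$ is the max-absolute-entry norm. *)

theory Defs
  imports "HOL-Probability.Probability"
begin

text \<open>Matrices are represented as functions nat => nat => real with rows i < nF
  (indexing the set of values of F) and columns j < nM (0-based; column j
  corresponds to outcome value j+1, so D = diag(1,...,M) has entry j+1).\<close>

definition mulv :: "nat \<Rightarrow> (nat \<Rightarrow> nat \<Rightarrow> real) \<Rightarrow> (nat \<Rightarrow> real) \<Rightarrow> nat \<Rightarrow> real" where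
  "mulv nM A w i = (\<Sum>j<nM. A i j * w j)"

definition supnorm :: "nat \<Rightarrow> (nat \<Rightarrow> real) \<Rightarrow> real" where
  "supnorm nF v = (MAX i\<in>{..<nF}. \<bar>v i\<bar>)"

definition matnorm :: "nat \<Rightarrow> nat \<Rightarrow> (nat \<Rightarrow> nat \<Rightarrow> real) \<Rightarrow> real" where
  "matnorm nF nM B = (MAX p\<in>{..<nF} \<times> {..<nM}. \<bar>B (fst p) (snd p)\<bar>)"

definition box :: "nat \<Rightarrow> real \<Rightarrow> (nat \<Rightarrow> real) set" where
  "box nM C = {w. \<forall>j<nM. 0 \<le> w j \<and> w j \<le> C}"

definition feas :: "nat \<Rightarrow> nat \<Rightarrow> real \<Rightarrow> (nat \<Rightarrow> nat \<Rightarrow> real) \<Rightarrow> (nat \<Rightarrow> real) \<Rightarrow> (nat \<Rightarrow> real) set" where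
  "feas nF nM C A \<beta> = {w \<in> box nM C. \<forall>i<nF. mulv nM A w i = \<beta> i}"

definition obj :: "nat \<Rightarrow> nat \<Rightarrow> (nat \<Rightarrow> nat \<Rightarrow> real) \<Rightarrow> (nat \<Rightarrow> real) \<Rightarrow> real" where
  "obj nF nM A w = (\<Sum>i<nF. \<Sum>j<nM. A i j * real (Suc j) * (w j + 1))"

definition theta_min where
  "theta_min nF nM C A \<beta> = (INF w\<in>feas nF nM C A \<beta>. obj nF nM A w)"
definition theta_max where
  "theta_max nF nM C A \<beta> = (SUP w\<in>feas nF nM C A \<beta>. obj nF nM A w)"

definition mhat where
  "mhat nF nM C A \<beta> = (INF w\<in>box nM C. supnorm nF (\<lambda>i. mulv nM A w i - \<beta> i))"

definition relax where
  "relax nF nM C A \<beta> t =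
     {w \<in> box nM C. supnorm nF (\<lambda>i. mulv nM A w i - \<beta> i) \<le> mhat nF nM C A \<beta> + t}"

definition thetahat_min where
  "thetahat_min nF nM C A \<beta> t = (INF w\<in>relax nF nM C A \<beta> t. obj nF nM A w)"
definition thetahat_max where
  "thetahat_max nF nM C A \<beta> t = (SUP w\<in>relax nF nM C A \<beta> t. obj nF nM A w)"

definition full_col_rank :: "nat \<Rightarrow> nat \<Rightarrow> (nat \<Rightarrow> nat \<Rightarrow> real) \<Rightarrow> bool" where
  "full_col_rank nF nM A \<longleftrightarrow>
     (\<forall>w. (\<forall>i<nF. mulv nM A w i = 0) \<longrightarrow> (\<forall>j<nM. w j = 0))"

text \<open>X n = O_p(r n): for every eps > 0 there are K, N such that for n >= N,
  |X n| <= K r n outside an event of probability at most eps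
  (outer-probability formulation; no measurability of X required).\<close>
definition bigOp :: "'a measure \<Rightarrow> (nat \<Rightarrow> 'a \<Rightarrow> real) \<Rightarrow> (nat \<Rightarrow> real) \<Rightarrow> bool" where
  "bigOp M X r \<longleftrightarrow>
     (\<forall>\<epsilon>>0. \<exists>K N. \<forall>n\<ge>N. \<exists>E\<in>sets M. measure M E \<ge> 1 - \<epsilon> \<and>
        (\<forall>\<omega>\<in>E \<inter> space M. \<bar>X n \<omega>\<bar> \<le> K * r n))"

end

(*
  Full column rank of A gives a left inverse of A (through the Gram matrix), hence a constant L
  with |w j| <= L * max_i |(A w) i|. In particular all feasible points agree with one w0 in F_0,
  so theta_min = theta_max = obj A w0. If the entries of A-hat and beta-hat are within a and b
  of those of A and beta, then w0 has residual at most nM C a + b for the estimated system, so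
  every w in the relaxed set with slack t satisfies |A (w - w0)| <= 2 (nM C a + b) + t, hence
  |w - w0| <= L (2 (nM C a + b) + t), and its estimated objective lies within K (a + b + t) of
  obj A w0. Both estimators are thus Lipschitz in (a, b, t); since a, b = O_p(n^(-1/2)) and
  t = kappa_n / sqrt n = O(n^(-1/2)), the claim follows.
*)
theory Submission
  imports Defs "Jordan_Normal_Form.Determinant"
begin

section \<open>Left inverses of matrices of full column rank\<close>

definition gram :: "nat \<Rightarrow> (nat \<Rightarrow> nat \<Rightarrow> real) \<Rightarrow> nat \<Rightarrow> nat \<Rightarrow> real" where
  "gram nF A k l = (\<Sum>i<nF. A i k * A i l)"

lemma mulv_gram: "mulv nM (gram nF A) w k = (\<Sum>i<nF. A i k * mulv nM A w i)"
  by (simp add: mulv_def gram_def sum_distrib_left sum_distrib_right mult.assoc sum.swap[of _ "{..<nM}"])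

lemma sum_mulv_squares:
  "(\<Sum>i<nF. (mulv nM A w i)\<^sup>2) = (\<Sum>k<nM. w k * mulv nM (gram nF A) w k)"
proof -
  have "(\<Sum>i<nF. (mulv nM A w i)\<^sup>2) = (\<Sum>i<nF. \<Sum>k<nM. mulv nM A w i * (A i k * w k))"
    by (simp add: power2_eq_square mulv_def sum_distrib_left)
  also have "\<dots> = (\<Sum>k<nM. \<Sum>i<nF. mulv nM A w i * (A i k * w k))"
    by (rule sum.swap)
  also have "\<dots> = (\<Sum>k<nM. w k * mulv nM (gram nF A) w k)"
    by (simp add: mulv_gram sum_distrib_left mult_ac)
  finally show ?thesis .
qed

lemma full_col_rank_gram:
  assumes "full_col_rank nF nM A"
  shows "full_col_rank nM nM (gram nF A)"
  unfolding full_col_rank_def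
proof (intro allI impI)
  fix w j assume "\<forall>k<nM. mulv nM (gram nF A) w k = 0" and "j < nM"
  from this(1) have "(\<Sum>i<nF. (mulv nM A w i)\<^sup>2) = 0"
    by (simp add: sum_mulv_squares)
  then have "\<forall>i<nF. mulv nM A w i = 0"
    by (simp add: sum_nonneg_eq_0_iff)
  then show "w j = 0"
    using assms \<open>j < nM\<close> unfolding full_col_rank_def by blast
qed

lemma mulv_eq_mult_mat_vec:
  assumes "i < nF"
  shows "mulv nM A w i = (mat nF nM (\<lambda>(i, j). A i j) *\<^sub>v vec nM w) $ i"
  using assms by (simp add: mulv_def scalar_prod_def atLeast0LessThan)

lemma full_col_rank_square_left_inverse:
  assumes rank: "full_col_rank n n G"
  shows "\<exists>N. \<forall>w. \<forall>j<n. w j = mulv n N (mulv n G w) j"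
proof -
  define Gm where "Gm = mat n n (\<lambda>(i, j). G i j)"
  have Gm: "Gm \<in> carrier_mat n n"
    by (simp add: Gm_def)
  have "det Gm \<noteq> 0"
  proof
    assume "det Gm = 0"
    then obtain v where v: "v \<in> carrier_vec n" "v \<noteq> 0\<^sub>v n" "Gm *\<^sub>v v = 0\<^sub>v n"
      using det_0_iff_vec_prod_zero[OF Gm] by blast
    have v_eq: "v = vec n (($) v)"
      using v(1) by auto
    have "\<forall>i<n. mulv n G (($) v) i = 0"
      using v(3) by (simp add: mulv_eq_mult_mat_vec flip: Gm_def v_eq)
    then have "v = 0\<^sub>v n"
      using rank v(1) unfolding full_col_rank_def by auto
    with v(2) show False ..
  qed
  then obtain Nm where Nm: "Nm \<in> carrier_mat n n" "Nm * Gm = 1\<^sub>m n"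
    using det_non_zero_imp_unit[OF Gm, of "()"] unfolding Units_def ring_mat_def by auto
  have "w j = mulv n (\<lambda>j k. Nm $$ (j, k)) (mulv n G w) j" if j: "j < n" for w j
  proof -
    have "vec n w = (Nm * Gm) *\<^sub>v vec n w"
      using Nm by simp
    also have "\<dots> = Nm *\<^sub>v (Gm *\<^sub>v vec n w)"
      using Nm Gm by (intro assoc_mult_mat_vec) auto
    finally have "w j = (Nm *\<^sub>v (Gm *\<^sub>v vec n w)) $ j"
      using j by (metis index_vec)
    also have "\<dots> = mulv n (\<lambda>j k. Nm $$ (j, k)) (mulv n G w) j"
      using j Nm by (simp add: mulv_def scalar_prod_def atLeast0LessThan Gm_def mulv_eq_mult_mat_vec)
    finally show ?thesis .
  qed
  then show ?thesis by blast
qed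

lemma full_col_rank_left_inverse:
  assumes "full_col_rank nF nM A"
  shows "\<exists>P. \<forall>w. \<forall>j<nM. w j = (\<Sum>i<nF. P j i * mulv nM A w i)"
proof -
  obtain N where N: "\<forall>w. \<forall>j<nM. w j = mulv nM N (mulv nM (gram nF A) w) j"
    using full_col_rank_square_left_inverse[OF full_col_rank_gram[OF assms]] by blast
  have "w j = (\<Sum>i<nF. (\<Sum>k<nM. N j k * A i k) * mulv nM A w i)" if "j < nM" for w j
  proof -
    have "w j = (\<Sum>k<nM. N j k * (\<Sum>i<nF. A i k * mulv nM A w i))"
      using N that by (simp add: mulv_def[of nM N] mulv_gram)
    also have "\<dots> = (\<Sum>i<nF. (\<Sum>k<nM. N j k * A i k) * mulv nM A w i)"
      by (simp add: sum_distrib_left sum_distrib_right mult.assoc sum.swap[of _ "{..<nF}"])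
    finally show ?thesis .
  qed
  then show ?thesis by (intro exI[of _ "\<lambda>j i. \<Sum>k<nM. N j k * A i k"]) blast
qed

lemma full_col_rank_coordinate_bound:
  assumes "full_col_rank nF nM A"
  shows "\<exists>L\<ge>0. \<forall>w c. 0 \<le> c \<longrightarrow> (\<forall>i<nF. \<bar>mulv nM A w i\<bar> \<le> c) \<longrightarrow> (\<forall>j<nM. \<bar>w j\<bar> \<le> L * c)"
proof -
  obtain P where P: "\<forall>w. \<forall>j<nM. w j = (\<Sum>i<nF. P j i * mulv nM A w i)"
    using full_col_rank_left_inverse[OF assms] by blast
  define L where "L = (\<Sum>j<nM. \<Sum>i<nF. \<bar>P j i\<bar>)"
  have "\<bar>w j\<bar> \<le> L * c"
    if c: "0 \<le> c" and Aw: "\<forall>i<nF. \<bar>mulv nM A w i\<bar> \<le> c" and j: "j < nM" for w c j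
  proof -
    have "\<bar>w j\<bar> = \<bar>\<Sum>i<nF. P j i * mulv nM A w i\<bar>"
      using P j by metis
    also have "\<dots> \<le> (\<Sum>i<nF. \<bar>P j i * mulv nM A w i\<bar>)"
      by (rule sum_abs)
    also have "\<dots> = (\<Sum>i<nF. \<bar>P j i\<bar> * \<bar>mulv nM A w i\<bar>)"
      by (simp add: abs_mult)
    also have "\<dots> \<le> (\<Sum>i<nF. \<bar>P j i\<bar> * c)"
      using Aw by (intro sum_mono mult_left_mono) auto
    also have "\<dots> \<le> L * c"
      unfolding L_def sum_distrib_right[symmetric] using j c
      by (intro mult_right_mono member_le_sum[where f = "\<lambda>j. \<Sum>i<nF. \<bar>P j i\<bar>"] sum_nonneg) auto
    finally show ?thesis .
  qed
  moreover have "0 \<le> L"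
    unfolding L_def by (intro sum_nonneg) auto
  ultimately show ?thesis by blast
qed

section \<open>Stability of the set-expansion estimator\<close>

lemma abs_le_supnorm: "i < nF \<Longrightarrow> \<bar>v i\<bar> \<le> supnorm nF v"
  unfolding supnorm_def by (intro Max_ge) auto

lemma supnorm_nonneg: "1 \<le> nF \<Longrightarrow> 0 \<le> supnorm nF v"
  using abs_le_supnorm[of 0 nF v] by linarith

lemma supnorm_le_iff: "1 \<le> nF \<Longrightarrow> supnorm nF v \<le> c \<longleftrightarrow> (\<forall>i<nF. \<bar>v i\<bar> \<le> c)"
  unfolding supnorm_def by (subst Max_le_iff) (auto simp: lessThan_empty_iff)

lemma abs_le_matnorm: "i < nF \<Longrightarrow> j < nM \<Longrightarrow> \<bar>B i j\<bar> \<le> matnorm nF nM B"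
  unfolding matnorm_def by (intro Max_ge) force+

lemma mulv_diff: "mulv nM A (\<lambda>j. w j - v j) i = mulv nM A w i - mulv nM A v i"
  by (simp add: mulv_def sum_subtractf right_diff_distrib)

lemma mulv_perturb:
  assumes "\<forall>j<nM. \<bar>Ah i j - A i j\<bar> \<le> a" and "w \<in> box nM C"
  shows "\<bar>mulv nM Ah w i - mulv nM A w i\<bar> \<le> real nM * C * a"
proof -
  have "\<bar>mulv nM Ah w i - mulv nM A w i\<bar> = \<bar>\<Sum>j<nM. (Ah i j - A i j) * w j\<bar>"
    by (simp add: mulv_def sum_subtractf left_diff_distrib)
  also have "\<dots> \<le> (\<Sum>j<nM. \<bar>(Ah i j - A i j) * w j\<bar>)"
    by (rule sum_abs)
  also have "\<dots> \<le> (\<Sum>j<nM. a * C)"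
    using assms by (intro sum_mono) (auto simp: box_def abs_mult intro!: mult_mono)
  finally show ?thesis by (simp add: mult_ac)
qed

lemma theta_min_max_eq_obj:
  assumes "full_col_rank nF nM A" and "w0 \<in> feas nF nM C A \<beta>"
  shows "theta_min nF nM C A \<beta> = obj nF nM A w0" and "theta_max nF nM C A \<beta> = obj nF nM A w0"
proof -
  have "obj nF nM A w = obj nF nM A w0" if w: "w \<in> feas nF nM C A \<beta>" for w
  proof -
    have "\<forall>i<nF. mulv nM A (\<lambda>j. w j - w0 j) i = 0"
      using w assms(2) by (simp add: feas_def mulv_diff)
    then have "\<forall>j<nM. w j - w0 j = 0"
      using assms(1) unfolding full_col_rank_def by blast
    then show ?thesis
      unfolding obj_def by (intro sum.cong refl) simp
  qed
  \<comment> \<open>feasible points agree with w0 only below nM, but obj reads no other coordinate\<close>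
  then have "obj nF nM A ` feas nF nM C A \<beta> = {obj nF nM A w0}"
    using assms(2) by blast
  then show "theta_min nF nM C A \<beta> = obj nF nM A w0" and "theta_max nF nM C A \<beta> = obj nF nM A w0"
    unfolding theta_min_def theta_max_def by simp_all
qed

lemma bdd_below_residuals: "1 \<le> nF \<Longrightarrow> bdd_below ((\<lambda>w. supnorm nF (\<lambda>i. mulv nM A w i - \<beta> i)) ` S)"
  by (intro bdd_belowI2[where m = 0] supnorm_nonneg)

lemma mhat_le_residual:
  assumes "1 \<le> nF" and "w \<in> box nM C" and "\<forall>i<nF. \<bar>mulv nM A w i - \<beta> i\<bar> \<le> e"
  shows "mhat nF nM C A \<beta> \<le> e"
proof -
  have "mhat nF nM C A \<beta> \<le> supnorm nF (\<lambda>i. mulv nM A w i - \<beta> i)"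
    unfolding mhat_def using assms(1,2) by (intro cINF_lower bdd_below_residuals)
  also have "\<dots> \<le> e"
    using assms(1,3) by (simp add: supnorm_le_iff)
  finally show ?thesis .
qed

lemma relax_nonempty:
  assumes "1 \<le> nF" and "box nM C \<noteq> {}" and "0 < t"
  shows "relax nF nM C A \<beta> t \<noteq> {}"
proof -
  have "(INF w\<in>box nM C. supnorm nF (\<lambda>i. mulv nM A w i - \<beta> i)) < mhat nF nM C A \<beta> + t"
    using assms(3) by (simp add: mhat_def)
  then obtain w where "w \<in> box nM C" "supnorm nF (\<lambda>i. mulv nM A w i - \<beta> i) < mhat nF nM C A \<beta> + t"
    using cINF_less_iff[OF assms(2) bdd_below_residuals[OF assms(1)]] by blast
  then show ?thesis
    unfolding relax_def by force
qed

lemma relax_residual_bound: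
  assumes nF: "1 \<le> nF" and w: "w \<in> relax nF nM C Ah bh t" and w0: "w0 \<in> feas nF nM C A \<beta>"
    and a: "\<forall>i<nF. \<forall>j<nM. \<bar>Ah i j - A i j\<bar> \<le> a" and b: "\<forall>i<nF. \<bar>bh i - \<beta> i\<bar> \<le> b"
    and i: "i < nF"
  shows "\<bar>mulv nM A (\<lambda>j. w j - w0 j) i\<bar> \<le> 2 * (real nM * C * a + b) + t"
proof -
  have w0_box: "w0 \<in> box nM C" and w0_eq: "\<forall>i<nF. mulv nM A w0 i = \<beta> i"
    using w0 by (auto simp: feas_def)
  have w_box: "w \<in> box nM C"
    using w by (simp add: relax_def)
  have "\<bar>mulv nM Ah w0 k - bh k\<bar> \<le> real nM * C * a + b" if k: "k < nF" for k
    using mulv_perturb[of nM Ah k A a w0 C] a b w0_box w0_eq k by fastforce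
  then have "mhat nF nM C Ah bh \<le> real nM * C * a + b"
    using mhat_le_residual[OF nF w0_box] by blast
  then have "\<bar>mulv nM Ah w i - bh i\<bar> \<le> real nM * C * a + b + t"
    using w abs_le_supnorm[OF i, of "\<lambda>i. mulv nM Ah w i - bh i"] by (simp add: relax_def)
  moreover have "\<bar>mulv nM Ah w i - mulv nM A w i\<bar> \<le> real nM * C * a"
    using mulv_perturb[of nM Ah i A a w C] a i w_box by blast
  moreover have "\<bar>bh i - \<beta> i\<bar> \<le> b"
    using b i by blast
  ultimately show ?thesis
    unfolding mulv_diff w0_eq[rule_format, OF i] by (auto simp: abs_le_iff)
qed

lemma abs_mult3_le:
  fixes x s y p q r :: real
  assumes "\<bar>x\<bar> \<le> p" and "0 \<le> s" and "s \<le> q" and "\<bar>y\<bar> \<le> r"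
  shows "\<bar>x * s * y\<bar> \<le> p * q * r"
proof -
  have "\<bar>x * s * y\<bar> = \<bar>x\<bar> * s * \<bar>y\<bar>"
    using assms(2) by (simp add: abs_mult)
  also have "\<dots> \<le> p * q * r"
    using assms by (intro mult_mono) auto
  finally show ?thesis .
qed

lemma obj_perturb:
  assumes w: "w \<in> box nM C" and A: "\<forall>i<nF. \<forall>j<nM. \<bar>A i j\<bar> \<le> 1"
    and a: "\<forall>i<nF. \<forall>j<nM. \<bar>Ah i j - A i j\<bar> \<le> a" and d: "\<forall>j<nM. \<bar>w j - v j\<bar> \<le> d"
  shows "\<bar>obj nF nM Ah w - obj nF nM A v\<bar> \<le> real nF * real nM * real nM * ((C + 1) * a + d)"
proof -
  let ?term = "\<lambda>i j. (Ah i j - A i j) * real (Suc j) * (w j + 1) + A i j * real (Suc j) * (w j - v j)"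
  have "obj nF nM Ah w - obj nF nM A v = (\<Sum>i<nF. \<Sum>j<nM. ?term i j)"
    unfolding obj_def sum_subtractf[symmetric] by (intro sum.cong refl) (simp add: algebra_simps)
  then have "\<bar>obj nF nM Ah w - obj nF nM A v\<bar> = \<bar>\<Sum>i<nF. \<Sum>j<nM. ?term i j\<bar>"
    by (rule arg_cong)
  also have "\<dots> \<le> (\<Sum>i<nF. \<Sum>j<nM. \<bar>?term i j\<bar>)"
    by (rule order_trans[OF sum_abs]) (intro sum_mono sum_abs)
  also have "\<dots> \<le> (\<Sum>i<nF. \<Sum>j<nM. a * real nM * (C + 1) + 1 * real nM * d)"
  proof (intro sum_mono)
    fix i j assume i: "i \<in> {..<nF}" and j: "j \<in> {..<nM}"
    have j_le: "real (Suc j) \<le> real nM"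
      using j by simp
    have "\<bar>w j + 1\<bar> \<le> C + 1"
      using w j by (auto simp: box_def)
    then have "\<bar>(Ah i j - A i j) * real (Suc j) * (w j + 1)\<bar> \<le> a * real nM * (C + 1)"
      using a i j j_le by (intro abs_mult3_le) auto
    moreover have "\<bar>A i j * real (Suc j) * (w j - v j)\<bar> \<le> 1 * real nM * d"
      using A d i j j_le by (intro abs_mult3_le) auto
    ultimately show "\<bar>?term i j\<bar> \<le> a * real nM * (C + 1) + 1 * real nM * d"
      by (smt (verit))
  qed
  also have "\<dots> = real nF * real nM * real nM * ((C + 1) * a + d)"
    by (simp add: algebra_simps)
  finally show ?thesis .
qed

lemma abs_INF_SUP_diff_le:
  fixes f :: "'b \<Rightarrow> real"
  assumes "S \<noteq> {}" and "\<forall>x\<in>S. \<bar>f x - c\<bar> \<le> D"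
  shows "\<bar>(INF x\<in>S. f x) - c\<bar> \<le> D" and "\<bar>(SUP x\<in>S. f x) - c\<bar> \<le> D"
proof -
  have f: "c - D \<le> f x" "f x \<le> c + D" if "x \<in> S" for x
    using assms(2) that by (auto simp: abs_le_iff)
  obtain x0 where x0: "x0 \<in> S"
    using assms(1) by blast
  have "bdd_below (f ` S)"
    by (rule bdd_belowI2[OF f(1)])
  moreover have "bdd_above (f ` S)"
    by (rule bdd_aboveI2[OF f(2)])
  ultimately have "(INF x\<in>S. f x) \<le> f x0" and "f x0 \<le> (SUP x\<in>S. f x)"
    using x0 by (auto intro: cINF_lower cSUP_upper)
  moreover have "c - D \<le> (INF x\<in>S. f x)" and "(SUP x\<in>S. f x) \<le> c + D"
    using assms(1) f by (auto intro: cINF_greatest cSUP_least)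
  ultimately show "\<bar>(INF x\<in>S. f x) - c\<bar> \<le> D" and "\<bar>(SUP x\<in>S. f x) - c\<bar> \<le> D"
    using f[OF x0] by (auto simp: abs_le_iff)
qed

lemma relax_obj_near:
  assumes nF: "1 \<le> nF" and C: "0 \<le> C" and A: "\<forall>i<nF. \<forall>j<nM. \<bar>A i j\<bar> \<le> 1"
    and L: "\<forall>w c. 0 \<le> c \<longrightarrow> (\<forall>i<nF. \<bar>mulv nM A w i\<bar> \<le> c) \<longrightarrow> (\<forall>j<nM. \<bar>w j\<bar> \<le> L * c)"
    and w0: "w0 \<in> feas nF nM C A \<beta>"
    and a: "\<forall>i<nF. \<forall>j<nM. \<bar>Ah i j - A i j\<bar> \<le> a" and b: "\<forall>i<nF. \<bar>bh i - \<beta> i\<bar> \<le> b"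
    and a0: "0 \<le> a" and b0: "0 \<le> b" and t: "0 < t" and w: "w \<in> relax nF nM C Ah bh t"
  shows "\<bar>obj nF nM Ah w - obj nF nM A w0\<bar>
    \<le> real nF * real nM * real nM * ((C + 1) * a + L * (2 * (real nM * C * a + b) + t))"
proof -
  have "0 \<le> 2 * (real nM * C * a + b) + t"
    using a0 b0 t C by simp
  then have "\<forall>j<nM. \<bar>w j - w0 j\<bar> \<le> L * (2 * (real nM * C * a + b) + t)"
    using L[rule_format, where w = "\<lambda>j. w j - w0 j"] relax_residual_bound[OF nF w w0 a b] by blast
  moreover have "w \<in> box nM C"
    using w by (simp add: relax_def)
  ultimately show ?thesis
    using obj_perturb[OF _ A a] by blast
qed

lemma thetahat_min_max_near:
  assumes "1 \<le> nF" and "box nM C \<noteq> {}" and "0 < t"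
    and "\<forall>w\<in>relax nF nM C A \<beta> t. \<bar>obj nF nM A w - c\<bar> \<le> D"
  shows "\<bar>thetahat_min nF nM C A \<beta> t - c\<bar> \<le> D" and "\<bar>thetahat_max nF nM C A \<beta> t - c\<bar> \<le> D"
  using abs_INF_SUP_diff_le[OF relax_nonempty[OF assms(1-3)] assms(4)]
  unfolding thetahat_min_def thetahat_max_def by blast+

lemma thetahat_theta_lipschitz:
  assumes nF: "1 \<le> nF" and nM: "1 \<le> nM" and C: "0 \<le> C"
    and A: "\<forall>i<nF. \<forall>j<nM. \<bar>A i j\<bar> \<le> 1"
    and feas: "feas nF nM C A \<beta> \<noteq> {}" and rank: "full_col_rank nF nM A"
  obtains K where "0 \<le> K"
    and "\<And>Ah bh t. 0 < t \<Longrightarrow>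
      \<bar>thetahat_min nF nM C Ah bh t - theta_min nF nM C A \<beta>\<bar>
        \<le> K * (matnorm nF nM (\<lambda>i j. Ah i j - A i j) + supnorm nF (\<lambda>i. bh i - \<beta> i) + t) \<and>
      \<bar>thetahat_max nF nM C Ah bh t - theta_max nF nM C A \<beta>\<bar>
        \<le> K * (matnorm nF nM (\<lambda>i j. Ah i j - A i j) + supnorm nF (\<lambda>i. bh i - \<beta> i) + t)"
proof -
  obtain L where L: "0 \<le> L"
    and L_bound: "\<forall>w c. 0 \<le> c \<longrightarrow> (\<forall>i<nF. \<bar>mulv nM A w i\<bar> \<le> c) \<longrightarrow> (\<forall>j<nM. \<bar>w j\<bar> \<le> L * c)"
    using full_col_rank_coordinate_bound[OF rank] by blast
  obtain w0 where w0: "w0 \<in> feas nF nM C A \<beta>"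
    using feas by blast
  then have box: "box nM C \<noteq> {}"
    by (auto simp: feas_def)
  define K' where "K' = C + 1 + 2 * L * (real nM * C + 1)"
  define K where "K = real nF * real nM * real nM * K'"
  show thesis
  proof (rule that)
    show "0 \<le> K"
      using L C by (simp add: K_def K'_def)
  next
    fix Ah bh and t :: real
    assume t: "0 < t"
    define a where "a = matnorm nF nM (\<lambda>i j. Ah i j - A i j)"
    define b where "b = supnorm nF (\<lambda>i. bh i - \<beta> i)"
    have a: "\<forall>i<nF. \<forall>j<nM. \<bar>Ah i j - A i j\<bar> \<le> a" and b: "\<forall>i<nF. \<bar>bh i - \<beta> i\<bar> \<le> b"
      using abs_le_matnorm[where B = "\<lambda>i j. Ah i j - A i j"] abs_le_supnorm[where v = "\<lambda>i. bh i - \<beta> i"]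
      by (simp_all add: a_def b_def)
    have a0: "0 \<le> a" and b0: "0 \<le> b"
      using a b nF nM by (auto intro: order_trans[OF abs_ge_zero])
    define d where "d = L * (2 * (real nM * C * a + b) + t)"
    have hat:
      "\<bar>thetahat_min nF nM C Ah bh t - obj nF nM A w0\<bar> \<le> real nF * real nM * real nM * ((C + 1) * a + d)"
      "\<bar>thetahat_max nF nM C Ah bh t - obj nF nM A w0\<bar> \<le> real nF * real nM * real nM * ((C + 1) * a + d)"
      using thetahat_min_max_near[OF nF box t] relax_obj_near[OF nF C A L_bound w0 a b a0 b0 t]
      unfolding d_def by blast+
    have "(C + 1) * a + d = (C + 1 + 2 * L * real nM * C) * a + (2 * L) * b + L * t"
      by (simp add: d_def algebra_simps)
    also have "\<dots> \<le> K' * (a + b + t)"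
      using L C a0 b0 t mult_nonneg_nonneg[OF L, of "real nM * C"] unfolding distrib_left
      by (intro add_mono mult_right_mono) (auto simp: K'_def algebra_simps)
    finally have "real nF * real nM * real nM * ((C + 1) * a + d) \<le> K * (a + b + t)"
      unfolding K_def mult.assoc by (intro mult_left_mono) simp_all
    then show "\<bar>thetahat_min nF nM C Ah bh t - theta_min nF nM C A \<beta>\<bar> \<le> K * (a + b + t) \<and>
      \<bar>thetahat_max nF nM C Ah bh t - theta_max nF nM C A \<beta>\<bar> \<le> K * (a + b + t)"
      using hat theta_min_max_eq_obj[OF rank w0] by linarith
  qed
qed

section \<open>Stochastic boundedness\<close>

lemma prob_Int_ge:
  assumes "prob_space M" and "A \<in> sets M" and "B \<in> sets M"
  shows "measure M A + measure M B - 1 \<le> measure M (A \<inter> B)"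
proof -
  interpret prob_space M by fact
  have "measure M (A \<union> B) = measure M A + measure M B - measure M (A \<inter> B)"
    using assms by (intro measure_Un3) (simp_all add: fmeasurable_eq_sets)
  moreover have "measure M (A \<union> B) \<le> 1"
    by (rule prob_le_1)
  ultimately show ?thesis by linarith
qed

lemma bigOp_mono:
  assumes X: "bigOp M X r" and Z: "\<forall>n\<ge>N. \<forall>\<omega>\<in>space M. \<bar>Z n \<omega>\<bar> \<le> \<bar>X n \<omega>\<bar>"
  shows "bigOp M Z r"
  unfolding bigOp_def
proof (intro allI impI)
  fix \<epsilon> :: real assume "0 < \<epsilon>"
  then obtain K N' where K: "\<forall>n\<ge>N'. \<exists>E\<in>sets M. 1 - \<epsilon> \<le> measure M E \<and>
      (\<forall>\<omega>\<in>E \<inter> space M. \<bar>X n \<omega>\<bar> \<le> K * r n)"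
    using X unfolding bigOp_def by blast
  have "\<exists>E\<in>sets M. 1 - \<epsilon> \<le> measure M E \<and> (\<forall>\<omega>\<in>E \<inter> space M. \<bar>Z n \<omega>\<bar> \<le> K * r n)"
    if n: "max N N' \<le> n" for n
  proof -
    obtain E where E: "E \<in> sets M" "1 - \<epsilon> \<le> measure M E"
      and bound: "\<forall>\<omega>\<in>E \<inter> space M. \<bar>X n \<omega>\<bar> \<le> K * r n"
      using K n by auto
    have "\<bar>Z n \<omega>\<bar> \<le> K * r n" if "\<omega> \<in> E \<inter> space M" for \<omega>
      using Z n bound that by (meson IntD2 max.boundedE order_trans)
    then show ?thesis
      using E by blast
  qed
  then show "\<exists>K N. \<forall>n\<ge>N. \<exists>E\<in>sets M. 1 - \<epsilon> \<le> measure M E \<and> (\<forall>\<omega>\<in>E \<inter> space M. \<bar>Z n \<omega>\<bar> \<le> K * r n)"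
    by blast
qed

lemma bigOp_abs: "bigOp M X r \<Longrightarrow> bigOp M (\<lambda>n \<omega>. \<bar>X n \<omega>\<bar>) r"
  by (rule bigOp_mono[where N = 0]) auto

lemma bigOp_cmult:
  assumes "bigOp M X r"
  shows "bigOp M (\<lambda>n \<omega>. c * X n \<omega>) r"
  unfolding bigOp_def
proof (intro allI impI)
  fix \<epsilon> :: real assume "0 < \<epsilon>"
  then obtain K N where K: "\<forall>n\<ge>N. \<exists>E\<in>sets M. 1 - \<epsilon> \<le> measure M E \<and>
      (\<forall>\<omega>\<in>E \<inter> space M. \<bar>X n \<omega>\<bar> \<le> K * r n)"
    using assms unfolding bigOp_def by blast
  have "\<bar>c * X n \<omega>\<bar> \<le> (\<bar>c\<bar> * K) * r n" if "\<bar>X n \<omega>\<bar> \<le> K * r n" for n \<omega>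
    using that by (simp add: abs_mult mult.assoc mult_left_mono)
  then show "\<exists>K N. \<forall>n\<ge>N. \<exists>E\<in>sets M. 1 - \<epsilon> \<le> measure M E \<and>
      (\<forall>\<omega>\<in>E \<inter> space M. \<bar>c * X n \<omega>\<bar> \<le> K * r n)"
    using K by meson
qed

lemma bigOp_add:
  assumes M: "prob_space M" and X: "bigOp M X r" and Y: "bigOp M Y r"
  shows "bigOp M (\<lambda>n \<omega>. X n \<omega> + Y n \<omega>) r"
  unfolding bigOp_def
proof (intro allI impI)
  fix \<epsilon> :: real assume "0 < \<epsilon>"
  then have "0 < \<epsilon> / 2" by simp
  then obtain KX NX where
    KX: "\<forall>n\<ge>NX. \<exists>E\<in>sets M. 1 - \<epsilon> / 2 \<le> measure M E \<and> (\<forall>\<omega>\<in>E \<inter> space M. \<bar>X n \<omega>\<bar> \<le> KX * r n)"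
    using X unfolding bigOp_def by blast
  obtain KY NY where
    KY: "\<forall>n\<ge>NY. \<exists>E\<in>sets M. 1 - \<epsilon> / 2 \<le> measure M E \<and> (\<forall>\<omega>\<in>E \<inter> space M. \<bar>Y n \<omega>\<bar> \<le> KY * r n)"
    using Y \<open>0 < \<epsilon> / 2\<close> unfolding bigOp_def by blast
  have "\<exists>E\<in>sets M. 1 - \<epsilon> \<le> measure M E \<and>
      (\<forall>\<omega>\<in>E \<inter> space M. \<bar>X n \<omega> + Y n \<omega>\<bar> \<le> (KX + KY) * r n)"
    if n: "max NX NY \<le> n" for n
  proof -
    have "NX \<le> n" and "NY \<le> n"
      using n by auto
    then obtain E1 E2 where E1: "E1 \<in> sets M" "1 - \<epsilon> / 2 \<le> measure M E1"
      "\<forall>\<omega>\<in>E1 \<inter> space M. \<bar>X n \<omega>\<bar> \<le> KX * r n"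
      and E2: "E2 \<in> sets M" "1 - \<epsilon> / 2 \<le> measure M E2"
      "\<forall>\<omega>\<in>E2 \<inter> space M. \<bar>Y n \<omega>\<bar> \<le> KY * r n"
      using KX KY by blast
    have "1 - \<epsilon> \<le> measure M (E1 \<inter> E2)"
      using prob_Int_ge[OF M E1(1) E2(1)] E1(2) E2(2) by linarith
    moreover have "\<bar>X n \<omega> + Y n \<omega>\<bar> \<le> (KX + KY) * r n" if "\<omega> \<in> (E1 \<inter> E2) \<inter> space M" for \<omega>
    proof -
      have "\<bar>X n \<omega>\<bar> \<le> KX * r n" and "\<bar>Y n \<omega>\<bar> \<le> KY * r n"
        using E1(3) E2(3) that by auto
      then show ?thesis
        using abs_triangle_ineq[of "X n \<omega>" "Y n \<omega>"] by (simp add: distrib_right)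
    qed
    ultimately show ?thesis
      using E1(1) E2(1) by blast
  qed
  then show "\<exists>K N. \<forall>n\<ge>N. \<exists>E\<in>sets M. 1 - \<epsilon> \<le> measure M E \<and>
      (\<forall>\<omega>\<in>E \<inter> space M. \<bar>X n \<omega> + Y n \<omega>\<bar> \<le> K * r n)"
    by blast
qed

lemma bigOp_rate:
  assumes "prob_space M" and "\<forall>n. 0 \<le> r n"
  shows "bigOp M (\<lambda>n \<omega>. r n) r"
  unfolding bigOp_def
proof (intro allI impI exI)
  fix \<epsilon> :: real and n :: nat assume "0 < \<epsilon>"
  show "\<exists>E\<in>sets M. 1 - \<epsilon> \<le> measure M E \<and> (\<forall>\<omega>\<in>E \<inter> space M. \<bar>r n\<bar> \<le> 1 * r n)"
    using assms \<open>0 < \<epsilon>\<close> by (intro bexI[of _ "space M"]) (auto simp: prob_space.prob_space)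
qed

lemma bigOp_dominated:
  assumes M: "prob_space M" and X: "bigOp M X r" and Y: "bigOp M Y r" and r: "\<forall>n. 0 \<le> r n"
    and Z: "\<forall>n\<ge>N. \<forall>\<omega>\<in>space M. \<bar>Z n \<omega>\<bar> \<le> K * (\<bar>X n \<omega>\<bar> + \<bar>Y n \<omega>\<bar> + c * r n)"
  shows "bigOp M Z r"
proof (rule bigOp_mono)
  show "bigOp M (\<lambda>n \<omega>. K * (\<bar>X n \<omega>\<bar> + \<bar>Y n \<omega>\<bar> + c * r n)) r"
    using M X Y r by (intro bigOp_cmult bigOp_add bigOp_abs bigOp_rate)
  show "\<forall>n\<ge>N. \<forall>\<omega>\<in>space M. \<bar>Z n \<omega>\<bar> \<le> \<bar>K * (\<bar>X n \<omega>\<bar> + \<bar>Y n \<omega>\<bar> + c * r n)\<bar>"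
    using Z by (meson abs_ge_self order_trans)
qed

theorem theorem3:
  fixes M :: "'a measure"
    and nF nM :: nat and C :: real
    and A :: "nat \<Rightarrow> nat \<Rightarrow> real" and \<beta> :: "nat \<Rightarrow> real"
    and Ahat :: "nat \<Rightarrow> 'a \<Rightarrow> nat \<Rightarrow> nat \<Rightarrow> real"
    and bhat :: "nat \<Rightarrow> 'a \<Rightarrow> nat \<Rightarrow> real"
    and \<kappa> :: "nat \<Rightarrow> real"
  assumes "prob_space M"
    and "nF \<ge> 1" and "nM \<ge> 1"
    and "\<forall>i<nF. \<forall>j<nM. 0 \<le> A i j \<and> A i j \<le> 1"
    and "\<forall>i<nF. 0 \<le> \<beta> i \<and> \<beta> i \<le> 1"
    and "C > 0"
    and "feas nF nM C A \<beta> \<noteq> {}"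
    and "bigOp M (\<lambda>n \<omega>. matnorm nF nM (\<lambda>i j. Ahat n \<omega> i j - A i j)) (\<lambda>n. 1 / sqrt (real n))"
    and "bigOp M (\<lambda>n \<omega>. supnorm nF (\<lambda>i. bhat n \<omega> i - \<beta> i)) (\<lambda>n. 1 / sqrt (real n))"
    and "full_col_rank nF nM A"
    and "\<forall>n. \<kappa> n > 0"
    and "\<exists>B. \<forall>n. \<kappa> n \<le> B"
  shows "bigOp M (\<lambda>n \<omega>. thetahat_min nF nM C (Ahat n \<omega>) (bhat n \<omega>) (\<kappa> n / sqrt (real n))
                         - theta_min nF nM C A \<beta>) (\<lambda>n. 1 / sqrt (real n))
       \<and> bigOp M (\<lambda>n \<omega>. thetahat_max nF nM C (Ahat n \<omega>) (bhat n \<omega>) (\<kappa> n / sqrt (real n))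
                         - theta_max nF nM C A \<beta>) (\<lambda>n. 1 / sqrt (real n))"
proof -
  let ?r = "\<lambda>n. 1 / sqrt (real n)"
  let ?a = "\<lambda>n \<omega>. matnorm nF nM (\<lambda>i j. Ahat n \<omega> i j - A i j)"
  let ?b = "\<lambda>n \<omega>. supnorm nF (\<lambda>i. bhat n \<omega> i - \<beta> i)"
  have A: "\<forall>i<nF. \<forall>j<nM. \<bar>A i j\<bar> \<le> 1"
    using assms(4) by auto
  obtain K where K: "0 \<le> K" and lipschitz: "\<And>Ah bh t. 0 < t \<Longrightarrow>
      \<bar>thetahat_min nF nM C Ah bh t - theta_min nF nM C A \<beta>\<bar>
        \<le> K * (matnorm nF nM (\<lambda>i j. Ah i j - A i j) + supnorm nF (\<lambda>i. bh i - \<beta> i) + t) \<and>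
      \<bar>thetahat_max nF nM C Ah bh t - theta_max nF nM C A \<beta>\<bar>
        \<le> K * (matnorm nF nM (\<lambda>i j. Ah i j - A i j) + supnorm nF (\<lambda>i. bh i - \<beta> i) + t)"
    using thetahat_theta_lipschitz[OF assms(2,3) less_imp_le[OF assms(6)] A assms(7,10)] by blast
  obtain B where B: "\<forall>n. \<kappa> n \<le> B"
    using assms(12) by blast
  have bound: "\<bar>thetahat_min nF nM C (Ahat n \<omega>) (bhat n \<omega>) (\<kappa> n / sqrt (real n)) - theta_min nF nM C A \<beta>\<bar>
        \<le> K * (\<bar>?a n \<omega>\<bar> + \<bar>?b n \<omega>\<bar> + \<bar>B\<bar> * ?r n) \<and>
      \<bar>thetahat_max nF nM C (Ahat n \<omega>) (bhat n \<omega>) (\<kappa> n / sqrt (real n)) - theta_max nF nM C A \<beta>\<bar>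
        \<le> K * (\<bar>?a n \<omega>\<bar> + \<bar>?b n \<omega>\<bar> + \<bar>B\<bar> * ?r n)" if "1 \<le> n" for n \<omega>
  proof -
    have t: "0 < \<kappa> n / sqrt (real n)" and "\<kappa> n / sqrt (real n) \<le> \<bar>B\<bar> * ?r n"
      using assms(11) B that by (simp_all add: divide_right_mono order_trans[OF _ abs_ge_self])
    then have "K * (?a n \<omega> + ?b n \<omega> + \<kappa> n / sqrt (real n)) \<le> K * (\<bar>?a n \<omega>\<bar> + \<bar>?b n \<omega>\<bar> + \<bar>B\<bar> * ?r n)"
      using K by (intro mult_left_mono add_mono abs_ge_self)
    then show ?thesis
      using lipschitz[where Ah = "Ahat n \<omega>" and bh = "bhat n \<omega>", OF t] by (meson order_trans)
  qed
  have r: "\<forall>n. 0 \<le> ?r n"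
    by simp
  show ?thesis
    by (intro conjI; rule bigOp_dominated[OF assms(1,8,9) r, where N = 1]; use bound in blast)
qed

end
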